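(* Consider two independent types of stations: for $l=1,2$, initial positions form a homogeneous Poisson point process on $\mathbb R^2$ of intensity $\lambda_l$, each station moves at speed $v_l$ in an independent uniform direction; let $\lambda=\lambda_1+\lambda_2$. Let $\mathcal H^l$ be the head point process of type-$l$ stations and $\mathcal L_e(v_1,v_2)=\{(t,L(t)):t\in\mathbb R\}$, $L(t)$ the distance to the origin of the nearest station (of either type) at time $t$. For $s\in\mathbb R$, $u>0$, $v>0$ let $E^{s,v}_u=\{(t,h):h>0,\ v^2(t-s)^2+h^2<u^2\}$. Then for every point $(s,u)$ lying on the radial bird of some station: (i) $(s,u)\in\mathcal L_e(v_1,v_2)$ if and only if $\mathcal H^l(E^{s,v_l}_u)=0$ for $l=1,2$; (ii) the event in (i) has probability $e^{-\lambda\pi u^2}$, i.e. $\mathbb P(\mathcal H^1(E^{s,v_1}_u)=0,\ \mathcal H^2(E^{s,v_2}_u)=0)=e^{-\lambda\pi u^2}$.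
   Context: The head $(T,H)$ of a type-$l$ station is the time and value of its minimal distance to the origin; its radial bird is $\{(t,(v_l^2(t-T)^2+H^2)^{1/2}):t\in\mathbb R\}$. $\mathcal H^l$ is a Poisson process of intensity $v_l\,dt\otimes2\lambda_l\,dh$, and $\mathcal H^1,\mathcal H^2$ are independent. *)

theory Defs
  imports "HOL-Probability.Probability"
begin

text \<open>Radial bird of a station of speed v with head (T,H): its distance to the origin at time t.\<close>
definition bird :: "real \<Rightarrow> real \<times> real \<Rightarrow> real \<Rightarrow> real" where
  "bird v p t = sqrt (v\<^sup>2 * (t - fst p)\<^sup>2 + (snd p)\<^sup>2)"

definition E_set :: "real \<Rightarrow> real \<Rightarrow> real \<Rightarrow> (real \<times> real) set" where
  "E_set s v u = {(t, h). h > 0 \<and> v\<^sup>2 * (t - s)\<^sup>2 + h\<^sup>2 < u\<^sup>2}"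

definition pp_space :: "(real \<times> real) set measure" where
  "pp_space = sigma UNIV
     (\<Union>B\<in>sets (borel :: (real \<times> real) measure). \<Union>k::nat.
        {{X. finite (X \<inter> B) \<and> card (X \<inter> B) = k}})"

definition poisson_pp ::
  "'a measure \<Rightarrow> ('a \<Rightarrow> (real \<times> real) set) \<Rightarrow> (real \<times> real) measure \<Rightarrow> bool" where
  "poisson_pp M N \<mu> \<longleftrightarrow>
     prob_space M \<and> sets \<mu> = sets borel \<and> N \<in> M \<rightarrow>\<^sub>M pp_space \<and>
     (\<forall>B\<in>sets borel. emeasure \<mu> B < \<infinity> \<longrightarrow>
        (AE \<omega> in M. finite (N \<omega> \<inter> B)) \<and>
        (\<forall>k::nat. measure M {\<omega>\<in>space M. finite (N \<omega> \<inter> B) \<and> card (N \<omega> \<inter> B) = k}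
                  = exp (- measure \<mu> B) * measure \<mu> B ^ k / fact k)) \<and>
     (\<forall>(I :: nat set) B. finite I \<longrightarrow> disjoint_family_on B I \<longrightarrow>
        (\<forall>i\<in>I. B i \<in> sets borel \<and> emeasure \<mu> (B i) < \<infinity>) \<longrightarrow>
        prob_space.indep_vars M (\<lambda>_. count_space UNIV) (\<lambda>i \<omega>. card (N \<omega> \<inter> B i)) I)"

definition head_intensity :: "real \<Rightarrow> real \<Rightarrow> (real \<times> real) measure" where
  "head_intensity v lam =
     density lborel (\<lambda>x. ennreal (v * (2 * lam)) * indicator {p. snd p > 0} x)"

definition nearest_dist ::
  "real \<Rightarrow> real \<Rightarrow> (real \<times> real) set \<Rightarrow> (real \<times> real) set \<Rightarrow> real \<Rightarrow> real" where
  "nearest_dist v1 v2 H1 H2 t =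
     Inf ((\<lambda>p. bird v1 p t) ` H1 \<union> (\<lambda>p. bird v2 p t) ` H2)"

definition lower_env ::
  "real \<Rightarrow> real \<Rightarrow> (real \<times> real) set \<Rightarrow> (real \<times> real) set \<Rightarrow> (real \<times> real) set" where
  "lower_env v1 v2 H1 H2 = {(t, nearest_dist v1 v2 H1 H2 t) | t. True}"

end

theory Submission
  imports Defs
begin

text \<open>
  Heads have positive height almost surely, since the intensity measure of each head process
  vanishes on the closed lower half-plane. A head p of positive height lies in the half-ellipse
  E^{s,v}_u exactly when the radial bird of p is below u at time s. Hence a point (s,u) on some
  bird lies on the lower envelope iff no bird passes below u at time s, i.e. iff both
  half-ellipses are void. The half-ellipse E^{s,v}_u has area pi u^2 / (2 v), so its intensity
  measure is lambda_l pi u^2, and the two Poisson void probabilities exp (- lambda_l pi u^2)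
  multiply by independence.
\<close>

lemma abs_less_sqrt_max_iff: "\<bar>y::real\<bar> < sqrt (max 0 b) \<longleftrightarrow> y\<^sup>2 < b"
proof -
  have "\<bar>y\<bar> < sqrt (max 0 b) \<longleftrightarrow> sqrt (y\<^sup>2) < sqrt (max 0 b)"
    by (simp add: real_sqrt_abs)
  also have "\<dots> \<longleftrightarrow> y\<^sup>2 < max 0 b"
    by (rule real_sqrt_less_iff)
  also have "\<dots> \<longleftrightarrow> y\<^sup>2 < b"
    by (smt (verit) zero_le_power2)
  finally show ?thesis .
qed

lemma vimage_Pair_ball:
  fixes r x :: real
  assumes "r > 0"
  shows "Pair x -` ball (0::real \<times> real) r
           = {- sqrt (max 0 (r\<^sup>2 - x\<^sup>2))<..<sqrt (max 0 (r\<^sup>2 - x\<^sup>2))}"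
proof -
  have "y \<in> Pair x -` ball 0 r \<longleftrightarrow> \<bar>y\<bar> < sqrt (max 0 (r\<^sup>2 - x\<^sup>2))" for y
  proof -
    have "y \<in> Pair x -` ball 0 r \<longleftrightarrow> sqrt (x\<^sup>2 + y\<^sup>2) < sqrt (r\<^sup>2)"
      using assms by (simp add: norm_Pair)
    also have "\<dots> \<longleftrightarrow> x\<^sup>2 + y\<^sup>2 < r\<^sup>2"
      by (rule real_sqrt_less_iff)
    also have "\<dots> \<longleftrightarrow> \<bar>y\<bar> < sqrt (max 0 (r\<^sup>2 - x\<^sup>2))"
      by (simp add: abs_less_sqrt_max_iff algebra_simps)
    finally show ?thesis .
  qed
  then show ?thesis
    by auto
qed

lemma nn_integral_semicircle:
  fixes r :: real
  assumes "r > 0"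
  shows "(\<integral>\<^sup>+x. ennreal (sqrt (max 0 (r\<^sup>2 - x\<^sup>2))) \<partial>lborel) = ennreal (pi * r\<^sup>2 / 2)"
proof -
  let ?I = "\<integral>\<^sup>+x. ennreal (sqrt (max 0 (r\<^sup>2 - x\<^sup>2))) \<partial>lborel"
  have "2 * ennreal (pi * r\<^sup>2 / 2) = emeasure lborel (ball (0::real \<times> real) r)"
    using assms by (simp add: emeasure_ball eval_unit_ball_vol power2_eq_square flip: ennreal_mult ennreal_numeral)
  also have "\<dots> = emeasure (lborel \<Otimes>\<^sub>M lborel) (ball (0::real \<times> real) r)"
    by (simp add: lborel_prod)
  also have "\<dots> = (\<integral>\<^sup>+x. emeasure lborel (Pair x -` ball (0::real \<times> real) r) \<partial>lborel)"
    by (rule lborel.emeasure_pair_measure_alt) (subst lborel_prod, simp)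
  also have "\<dots> = (\<integral>\<^sup>+x. 2 * ennreal (sqrt (max 0 (r\<^sup>2 - x\<^sup>2))) \<partial>lborel)"
    using assms by (intro nn_integral_cong) (simp add: vimage_Pair_ball ennreal_mult)
  also have "\<dots> = 2 * ?I"
    by (rule nn_integral_cmult) measurable
  finally show ?thesis
    by (simp add: ennreal_mult_cancel_left)
qed

lemma open_E_set: "open (E_set s v u)"
proof -
  have "E_set s v u = {x. 0 < snd x \<and> v\<^sup>2 * (fst x - s)\<^sup>2 + (snd x)\<^sup>2 < u\<^sup>2}"
    by (auto simp: E_set_def)
  then show ?thesis
    by (simp add: open_Collect_conj open_Collect_less continuous_intros)
qed

lemma E_set_borel: "E_set s v u \<in> sets borel"
  by (simp add: open_E_set)

lemma vimage_Pair_E_set: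
  fixes u v s t :: real
  assumes "u > 0"
  shows "Pair t -` E_set s v u = {0<..<sqrt (max 0 (u\<^sup>2 - (v * (t - s))\<^sup>2))}"
proof -
  have "h < sqrt (max 0 b) \<longleftrightarrow> h\<^sup>2 < b" if "h > 0" for h b :: real
    using abs_less_sqrt_max_iff[of h b] that by simp
  then show ?thesis
    by (auto simp: E_set_def power_mult_distrib)
qed

lemma emeasure_lborel_E_set:
  fixes u v s :: real
  assumes u: "u > 0" and v: "v > 0"
  shows "emeasure lborel (E_set s v u) = ennreal (pi * u\<^sup>2 / (2 * v))"
proof -
  let ?g = "\<lambda>x. ennreal (sqrt (max 0 (u\<^sup>2 - x\<^sup>2)))"
  have "emeasure lborel (E_set s v u) = emeasure (lborel \<Otimes>\<^sub>M lborel) (E_set s v u)"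
    by (simp add: lborel_prod)
  also have "\<dots> = (\<integral>\<^sup>+t. emeasure lborel (Pair t -` E_set s v u) \<partial>lborel)"
    by (rule lborel.emeasure_pair_measure_alt) (subst lborel_prod, simp add: E_set_borel)
  also have "\<dots> = (\<integral>\<^sup>+t. ?g (v * (t - s)) \<partial>lborel)"
    using u by (intro nn_integral_cong) (simp add: vimage_Pair_E_set)
  also have "\<dots> = ennreal (1 / v) * (\<integral>\<^sup>+x. ?g (v * ((s + 1 / v * x) - s)) \<partial>lborel)"
    using v by (subst nn_integral_real_affine[where c = "1 / v" and t = s]) auto
  also have "\<dots> = ennreal (1 / v) * ennreal (pi * u\<^sup>2 / 2)"
    using v by (simp add: nn_integral_semicircle[OF u])
  also have "\<dots> = ennreal (pi * u\<^sup>2 / (2 * v))"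
    using v by (simp flip: ennreal_mult)
  finally show ?thesis .
qed

lemma emeasure_head_intensity:
  assumes "B \<in> sets borel"
  shows "emeasure (head_intensity v lam) B
           = ennreal (v * (2 * lam)) * emeasure lborel (B \<inter> {p. 0 < snd p})"
proof -
  have [measurable]: "{p::real \<times> real. 0 < snd p} \<in> sets borel"
    by (intro borel_open open_Collect_less continuous_intros)
  have "emeasure (head_intensity v lam) B
      = (\<integral>\<^sup>+x. ennreal (v * (2 * lam)) * indicator (B \<inter> {p. 0 < snd p}) x \<partial>lborel)"
    unfolding head_intensity_def using assms
    by (subst emeasure_density)
       (auto intro!: nn_integral_cong simp del: indicator_simps simp: indicator_inter_arith ac_simps)
  also have "\<dots> = ennreal (v * (2 * lam)) * emeasure lborel (B \<inter> {p. 0 < snd p})"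
    using assms by (simp add: nn_integral_cmult_indicator)
  finally show ?thesis .
qed

lemma emeasure_head_intensity_E_set:
  assumes "u > 0" "v > 0"
  shows "emeasure (head_intensity v lam) (E_set s v u) = ennreal (lam * pi * u\<^sup>2)"
proof -
  have "E_set s v u \<inter> {p. 0 < snd p} = E_set s v u"
    by (auto simp: E_set_def)
  moreover have "v * (2 * lam) * (pi * u\<^sup>2 / (2 * v)) = lam * (pi * u\<^sup>2)"
    using assms by (simp add: field_simps)
  ultimately show ?thesis
    using assms by (simp add: emeasure_head_intensity E_set_borel emeasure_lborel_E_set mult.assoc
        flip: ennreal_mult'')
qed

lemma poisson_pp_prob_space: "poisson_pp M N \<mu> \<Longrightarrow> prob_space M"
  by (simp add: poisson_pp_def)

lemma sets_pp_space_void: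
  assumes "B \<in> sets borel"
  shows "{X. X \<inter> B = {}} \<in> sets pp_space"
proof -
  have "{X. X \<inter> B = {}} = {X. finite (X \<inter> B) \<and> card (X \<inter> B) = 0}"
    by auto
  with assms show ?thesis
    unfolding pp_space_def by (subst sets_measure_of) blast+
qed

lemma poisson_pp_void_prob:
  assumes "poisson_pp M N \<mu>" "B \<in> sets borel" "emeasure \<mu> B = ennreal c" "c \<ge> 0"
  shows "measure M {\<omega>\<in>space M. N \<omega> \<inter> B = {}} = exp (- c)"
proof -
  have "measure M {\<omega>\<in>space M. finite (N \<omega> \<inter> B) \<and> card (N \<omega> \<inter> B) = 0}
         = exp (- measure \<mu> B) * measure \<mu> B ^ 0 / fact 0"
    using assms unfolding poisson_pp_def by simp
  moreover have "{\<omega>\<in>space M. finite (N \<omega> \<inter> B) \<and> card (N \<omega> \<inter> B) = 0}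
                   = {\<omega>\<in>space M. N \<omega> \<inter> B = {}}"
    by auto
  ultimately show ?thesis
    using assms by (simp add: measure_def)
qed

lemma poisson_pp_AE_void:
  assumes "poisson_pp M N \<mu>" "B \<in> sets borel" "emeasure \<mu> B = 0"
  shows "AE \<omega> in M. N \<omega> \<inter> B = {}"
proof -
  interpret prob_space M
    using poisson_pp_prob_space[OF assms(1)] .
  have "prob {\<omega>\<in>space M. N \<omega> \<inter> B = {}} = 1"
    using poisson_pp_void_prob[of M N \<mu> B 0] assms by simp
  from AE_prob_1[OF this] show ?thesis
    by auto
qed

lemma AE_poisson_pp_head_intensity_upper_half:
  assumes "poisson_pp M N (head_intensity v lam)"
  shows "AE \<omega> in M. N \<omega> \<inter> {p. snd p \<le> 0} = {}"
proof (rule poisson_pp_AE_void[OF assms])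
  show lower_half: "{p::real \<times> real. snd p \<le> 0} \<in> sets borel"
    by (intro borel_closed closed_Collect_le continuous_intros)
  have "{p::real \<times> real. snd p \<le> 0} \<inter> {p. 0 < snd p} = {}"
    by auto
  then show "emeasure (head_intensity v lam) {p. snd p \<le> 0} = 0"
    by (simp add: emeasure_head_intensity[OF lower_half])
qed

lemma indep_poisson_pp_void_prob:
  assumes "poisson_pp M N1 \<mu>1" "poisson_pp M N2 \<mu>2"
    and "prob_space.indep_var M pp_space N1 pp_space N2"
    and "B1 \<in> sets borel" "emeasure \<mu>1 B1 = ennreal c" "c \<ge> 0"
    and "B2 \<in> sets borel" "emeasure \<mu>2 B2 = ennreal d" "d \<ge> 0"
  shows "measure M {\<omega>\<in>space M. N1 \<omega> \<inter> B1 = {} \<and> N2 \<omega> \<inter> B2 = {}} = exp (- (c + d))"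
proof -
  interpret prob_space M
    using poisson_pp_prob_space[OF assms(1)] .
  have "{\<omega>\<in>space M. N1 \<omega> \<inter> B1 = {} \<and> N2 \<omega> \<inter> B2 = {}}
          = (\<lambda>\<omega>. (N1 \<omega>, N2 \<omega>)) -` ({X. X \<inter> B1 = {}} \<times> {X. X \<inter> B2 = {}}) \<inter> space M"
    by auto
  also have "prob \<dots> = prob (N1 -` {X. X \<inter> B1 = {}} \<inter> space M)
                       * prob (N2 -` {X. X \<inter> B2 = {}} \<inter> space M)"
    by (rule indep_varD[OF assms(3) sets_pp_space_void[OF assms(4)] sets_pp_space_void[OF assms(7)]])
  also have "\<dots> = exp (- c) * exp (- d)"
  proof -
    have "N -` {X. X \<inter> B = {}} \<inter> space M = {\<omega>\<in>space M. N \<omega> \<inter> B = {}}"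
      for N :: "'a \<Rightarrow> (real \<times> real) set" and B
      by auto
    then show ?thesis
      using poisson_pp_void_prob[OF assms(1,4-6)] poisson_pp_void_prob[OF assms(2,7-9)] by simp
  qed
  finally show ?thesis
    by (simp flip: exp_add)
qed

lemma mem_E_set_iff_bird_less:
  assumes "u > 0" "snd p > 0"
  shows "p \<in> E_set s v u \<longleftrightarrow> bird v p s < u"
proof -
  have "bird v p s < u \<longleftrightarrow> sqrt (v\<^sup>2 * (s - fst p)\<^sup>2 + (snd p)\<^sup>2) < sqrt (u\<^sup>2)"
    using assms by (simp add: bird_def)
  also have "\<dots> \<longleftrightarrow> v\<^sup>2 * (s - fst p)\<^sup>2 + (snd p)\<^sup>2 < u\<^sup>2"
    by (rule real_sqrt_less_iff)
  also have "(s - fst p)\<^sup>2 = (fst p - s)\<^sup>2"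
    by (rule power2_commute)
  finally show ?thesis
    using assms by (cases p) (simp add: E_set_def)
qed

lemma cInf_eq_iff_lower_bound:
  fixes z :: "'a :: conditionally_complete_lattice"
  assumes "z \<in> X" "bdd_below X"
  shows "Inf X = z \<longleftrightarrow> (\<forall>x\<in>X. z \<le> x)"
  using assms by (metis cInf_eq_minimum cInf_lower)

lemma mem_lower_env_iff_E_sets_void:
  assumes "u > 0"
    and "H1 \<inter> {p. snd p \<le> 0} = {}" "H2 \<inter> {p. snd p \<le> 0} = {}"
    and "(\<exists>p\<in>H1. u = bird v1 p s) \<or> (\<exists>p\<in>H2. u = bird v2 p s)"
  shows "(s, u) \<in> lower_env v1 v2 H1 H2 \<longleftrightarrow> H1 \<inter> E_set s v1 u = {} \<and> H2 \<inter> E_set s v2 u = {}"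
proof -
  define S where "S = (\<lambda>p. bird v1 p s) ` H1 \<union> (\<lambda>p. bird v2 p s) ` H2"
  have "u \<in> S"
    using assms(4) unfolding S_def by auto
  have "bdd_below S"
    unfolding S_def by (rule bdd_belowI[of _ 0]) (auto simp: bird_def)
  have "(s, u) \<in> lower_env v1 v2 H1 H2 \<longleftrightarrow> Inf S = u"
    unfolding lower_env_def nearest_dist_def S_def by auto
  also have "\<dots> \<longleftrightarrow> (\<forall>x\<in>S. u \<le> x)"
    using \<open>u \<in> S\<close> \<open>bdd_below S\<close> by (rule cInf_eq_iff_lower_bound)
  also have "\<dots> \<longleftrightarrow> H1 \<inter> E_set s v1 u = {} \<and> H2 \<inter> E_set s v2 u = {}"
    using assms(1-3) unfolding S_def
    by (force simp: mem_E_set_iff_bird_less not_less)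
  finally show ?thesis .
qed

theorem lemma7p4:
  fixes M :: "'a measure" and H1 H2 :: "'a \<Rightarrow> (real \<times> real) set"
    and v1 v2 lam1 lam2 :: real
  assumes "v1 > 0" "v2 > 0" "lam1 > 0" "lam2 > 0"
    and "poisson_pp M H1 (head_intensity v1 lam1)"
    and "poisson_pp M H2 (head_intensity v2 lam2)"
    and "prob_space.indep_var M pp_space H1 pp_space H2"
  shows "(AE \<omega> in M. \<forall>s u. u > 0 \<longrightarrow>
            ((\<exists>p\<in>H1 \<omega>. u = bird v1 p s) \<or> (\<exists>p\<in>H2 \<omega>. u = bird v2 p s)) \<longrightarrow>
            ((s, u) \<in> lower_env v1 v2 (H1 \<omega>) (H2 \<omega>) \<longleftrightarrow>
               H1 \<omega> \<inter> E_set s v1 u = {} \<and> H2 \<omega> \<inter> E_set s v2 u = {}))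
       \<and> (\<forall>s u. u > 0 \<longrightarrow>
            measure M {\<omega>\<in>space M. H1 \<omega> \<inter> E_set s v1 u = {} \<and> H2 \<omega> \<inter> E_set s v2 u = {}}
              = exp (- (lam1 + lam2) * pi * u\<^sup>2))"
proof -
  have "AE \<omega> in M. H1 \<omega> \<inter> {p. snd p \<le> 0} = {} \<and> H2 \<omega> \<inter> {p. snd p \<le> 0} = {}"
    using assms(5,6) by (intro AE_conjI AE_poisson_pp_head_intensity_upper_half)
  moreover have "measure M {\<omega>\<in>space M. H1 \<omega> \<inter> E_set s v1 u = {} \<and> H2 \<omega> \<inter> E_set s v2 u = {}}
                   = exp (- (lam1 + lam2) * pi * u\<^sup>2)" if "u > 0" for s u
    using that assms
    by (subst indep_poisson_pp_void_prob[where c = "lam1 * pi * u\<^sup>2" and d = "lam2 * pi * u\<^sup>2"])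
       (auto simp: E_set_borel emeasure_head_intensity_E_set algebra_simps)
  ultimately show ?thesis
    using mem_lower_env_iff_E_sets_void
    by (intro conjI allI impI) (erule eventually_mono, blast, blast)
qed

end
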